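(* Let $T$ be a tournament, let $v\in V(T)$ and let $c\in\mathbb{N}$ with $c\ge 2$. Suppose that $d^-_T(v)\ge 2^{c-1}$. Then there exist disjoint sets $A,E\subseteq V(T)$ and a vertex $a\in A$ such that: (i) $2\le |A|\le c$ and $T[A]$ is a transitive tournament with source $a$ and sink $v$; (ii) $A\setminus\{a\}$ out-dominates $V(T)\setminus(A\cup E)$; (iii) $|E|\le (1/2)^{c-2} d^-_T(v)$.
   Context: $d^-_T(v)$ is the in-degree of $v$ in $T$. A tournament is transitive if its vertices can be enumerated $v_1,\dots,v_m$ so that $v_iv_j$ is an edge iff $i<j$; then $v_1$ is its source and $v_m$ its sink. A set $A$ out-dominates a set $B$ if for every $b\in B$ there is $a'\in A$ with $a'b\in E(T)$. *)

theory Defs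
  imports Complex_Main
begin

definition tournament :: "'a set \<Rightarrow> ('a \<Rightarrow> 'a \<Rightarrow> bool) \<Rightarrow> bool" where
  "tournament V adj \<longleftrightarrow> finite V \<and>
     (\<forall>u w. adj u w \<longrightarrow> u \<in> V \<and> w \<in> V) \<and>
     (\<forall>u. \<not> adj u u) \<and>
     (\<forall>u\<in>V. \<forall>w\<in>V. u \<noteq> w \<longrightarrow> (adj u w \<longleftrightarrow> \<not> adj w u))"

definition in_degree :: "'a set \<Rightarrow> ('a \<Rightarrow> 'a \<Rightarrow> bool) \<Rightarrow> 'a \<Rightarrow> nat" where
  "in_degree V adj v = card {u \<in> V. adj u v}"

definition transitive_with_source_sink ::
  "('a \<Rightarrow> 'a \<Rightarrow> bool) \<Rightarrow> 'a set \<Rightarrow> 'a \<Rightarrow> 'a \<Rightarrow> bool" where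
  "transitive_with_source_sink adj A a v \<longleftrightarrow>
     (\<exists>xs. distinct xs \<and> set xs = A \<and> xs \<noteq> [] \<and> hd xs = a \<and> last xs = v \<and>
        (\<forall>i<length xs. \<forall>j<length xs. adj (xs ! i) (xs ! j) \<longleftrightarrow> i < j))"

definition out_dominates :: "('a \<Rightarrow> 'a \<Rightarrow> bool) \<Rightarrow> 'a set \<Rightarrow> 'a set \<Rightarrow> bool" where
  "out_dominates adj A B \<longleftrightarrow> (\<forall>b\<in>B. \<exists>a'\<in>A. adj a' b)"

end

theory Submission
  imports Defs
begin

text \<open>Grow the transitive tournament backwards from its sink v. At each stage the chain
  ys out-dominates everything except a set S of candidates that beat all of ys
  (initially the in-neighbours of v). If |S| \<ge> 2, some x \<in> S has in-degree in S between 1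
  and |S|/2 (the average in-degree is (|S|-1)/2); prepending x shrinks the candidates to
  the in-neighbours of x in S, at least halving them, while the rest of S is now beaten
  by x. After c - 2 halvings, one last candidate a becomes the source and the remaining
  candidates form E.\<close>

lemma tournamentD:
  assumes "tournament V adj"
  shows "finite V" "\<And>u w. adj u w \<Longrightarrow> u \<in> V" "\<And>u w. adj u w \<Longrightarrow> w \<in> V" "\<And>u. \<not> adj u u"
    "\<And>u w. u \<in> V \<Longrightarrow> w \<in> V \<Longrightarrow> u \<noteq> w \<Longrightarrow> adj u w \<longleftrightarrow> \<not> adj w u"
  using assms unfolding tournament_def by blast+

lemma tournament_finite_subset: "tournament V adj \<Longrightarrow> S \<subseteq> V \<Longrightarrow> finite S"
  using tournamentD(1) finite_subset by blast

lemma in_degree_add_out_degree: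
  assumes T: "tournament V adj" and S: "S \<subseteq> V" and x: "x \<in> S"
  shows "in_degree S adj x + card {u\<in>S. adj x u} = card S - 1"
proof -
  have "{u\<in>S. adj u x} \<union> {u\<in>S. adj x u} = S - {x}"
    and "{u\<in>S. adj u x} \<inter> {u\<in>S. adj x u} = {}"
    using tournamentD(4,5)[OF T] S x by auto
  then show ?thesis
    using card_Un_disjoint[of "{u\<in>S. adj u x}" "{u\<in>S. adj x u}"]
      tournament_finite_subset[OF T S] x
    by (simp add: in_degree_def)
qed

lemma sum_in_degree:
  assumes T: "tournament V adj" and S: "S \<subseteq> V"
  shows "2 * (\<Sum>x\<in>S. in_degree S adj x) = card S * (card S - 1)"
proof -
  have fin: "finite S" using tournament_finite_subset[OF T S] .
  have card_filter: "\<And>P. card {u\<in>S. P u} = (\<Sum>u\<in>S. if P u then 1 else (0::nat))"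
    using fin by (simp add: sum.If_cases Collect_conj_eq Int_commute)
  have "(\<Sum>x\<in>S. in_degree S adj x) = (\<Sum>x\<in>S. \<Sum>u\<in>S. if adj u x then 1 else (0::nat))"
    by (simp add: in_degree_def card_filter)
  also have "\<dots> = (\<Sum>u\<in>S. \<Sum>x\<in>S. if adj u x then 1 else (0::nat))"
    by (rule sum.swap)
  also have "\<dots> = (\<Sum>u\<in>S. card {x\<in>S. adj u x})"
    by (simp add: card_filter)
  finally have in_out: "(\<Sum>x\<in>S. in_degree S adj x) = (\<Sum>x\<in>S. card {u\<in>S. adj x u})" .
  have "(\<Sum>x\<in>S. in_degree S adj x) + (\<Sum>x\<in>S. card {u\<in>S. adj x u}) = (\<Sum>x\<in>S. card S - 1)"
    unfolding sum.distrib[symmetric] using in_degree_add_out_degree[OF T S] by (intro sum.cong) auto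
  then show ?thesis using in_out by simp
qed

lemma ex_in_degree_le_half:
  assumes T: "tournament V adj" and S: "S \<subseteq> V" and "S \<noteq> {}"
  shows "\<exists>x\<in>S. 2 * in_degree S adj x \<le> card S - 1"
proof (rule ccontr)
  assume "\<not> ?thesis"
  then have "(\<Sum>x\<in>S. card S) \<le> (\<Sum>x\<in>S. 2 * in_degree S adj x)"
    by (intro sum_mono) auto
  then have "card S * card S \<le> card S * (card S - 1)"
    using sum_in_degree[OF T S] by (simp add: sum_distrib_left[symmetric])
  moreover have "card S > 0"
    using tournament_finite_subset[OF T S] \<open>S \<noteq> {}\<close> by auto
  ultimately show False by simp
qed

text \<open>If S has a source s, a vertex of low in-degree in S - {s} gains exactly the in-edge from s.\<close>

lemma ex_in_degree_pos_le_half: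
  assumes T: "tournament V adj" and S: "S \<subseteq> V" and two: "2 \<le> card S"
  shows "\<exists>x\<in>S. 1 \<le> in_degree S adj x \<and> 2 * in_degree S adj x \<le> card S"
proof (cases "\<exists>s\<in>S. in_degree S adj s = 0")
  case False
  moreover have "S \<noteq> {}" using two by auto
  ultimately show ?thesis using ex_in_degree_le_half[OF T S] by fastforce
next
  case True
  then obtain s where s: "s \<in> S" "in_degree S adj s = 0" by blast
  have fin: "finite S" using tournament_finite_subset[OF T S] .
  have "card (S - {s}) \<noteq> 0" using two fin s(1) by simp
  then have "S - {s} \<noteq> {}" by (metis card.empty)
  then obtain y where y: "y \<in> S - {s}" "2 * in_degree (S - {s}) adj y \<le> card (S - {s}) - 1"
    using ex_in_degree_le_half[OF T, of "S - {s}"] S by blast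
  have "\<not> adj y s" using s fin y by (auto simp: in_degree_def)
  then have "adj s y" using tournamentD(5)[OF T, of s y] S s(1) y(1) by auto
  then have "{u\<in>S. adj u y} = insert s {u\<in>S - {s}. adj u y}" using s(1) by auto
  then have "in_degree S adj y = Suc (in_degree (S - {s}) adj y)"
    using fin by (simp add: in_degree_def)
  then show ?thesis using y s(1) fin two by (intro bexI[of _ y]) auto
qed

lemma sorted_wrt_irrefl_distinct:
  "(\<And>u. \<not> adj u u) \<Longrightarrow> sorted_wrt adj xs \<Longrightarrow> distinct xs"
  by (induction xs) auto

lemma sorted_wrt_transitive_with_source_sink:
  assumes T: "tournament V adj" and sw: "sorted_wrt adj xs" and "xs \<noteq> []"
  shows "transitive_with_source_sink adj (set xs) (hd xs) (last xs)"
proof -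
  have d: "distinct xs" using sorted_wrt_irrefl_distinct tournamentD(4)[OF T] sw by blast
  have lt: "\<And>i j. i < j \<Longrightarrow> j < length xs \<Longrightarrow> adj (xs ! i) (xs ! j)"
    using sw by (simp add: sorted_wrt_iff_nth_less)
  have "adj (xs ! i) (xs ! j) \<longleftrightarrow> i < j" if "i < length xs" "j < length xs" for i j
  proof (cases i j rule: linorder_cases)
    case greater
    then have "adj (xs ! j) (xs ! i)" and "xs ! i \<noteq> xs ! j"
      using lt that d by (auto simp: nth_eq_iff_index_eq)
    moreover have "xs ! i \<in> V" "xs ! j \<in> V"
      using \<open>adj (xs ! j) (xs ! i)\<close> tournamentD(2,3)[OF T] by blast+
    ultimately show ?thesis using greater tournamentD(5)[OF T, of "xs ! i" "xs ! j"] by simp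
  qed (use lt that tournamentD(4)[OF T] in auto)
  then show ?thesis
    unfolding transitive_with_source_sink_def using d \<open>xs \<noteq> []\<close> by blast
qed

definition candidate_chain :: "'a set \<Rightarrow> ('a \<Rightarrow> 'a \<Rightarrow> bool) \<Rightarrow> 'a set \<Rightarrow> 'a list \<Rightarrow> bool" where
  "candidate_chain V adj S ys \<longleftrightarrow> S \<subseteq> V \<and> sorted_wrt adj ys \<and>
     (\<forall>u\<in>S. \<forall>w\<in>set ys. adj u w) \<and> out_dominates adj (set ys) (V - (set ys \<union> S))"

lemma candidate_chain_sink:
  assumes T: "tournament V adj" and "v \<in> V"
  shows "candidate_chain V adj {u\<in>V. adj u v} [v]"
  using tournamentD(5)[OF T] assms(2)
  by (auto simp: candidate_chain_def out_dominates_def)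

lemma candidate_chain_extend:
  assumes T: "tournament V adj" and C: "candidate_chain V adj S ys" and x: "x \<in> S"
  shows "candidate_chain V adj {u\<in>S. adj u x} (x # ys)"
proof -
  have xV: "x \<in> V" using C x by (auto simp: candidate_chain_def)
  have "out_dominates adj (set (x # ys)) (V - (set (x # ys) \<union> {u\<in>S. adj u x}))"
    unfolding out_dominates_def
  proof
    fix b assume b: "b \<in> V - (set (x # ys) \<union> {u\<in>S. adj u x})"
    show "\<exists>a'\<in>set (x # ys). adj a' b"
    proof (cases "b \<in> S")
      case True
      then have "adj x b" using tournamentD(5)[OF T, of x b] xV b by auto
      then show ?thesis by simp
    next
      case False
      then show ?thesis using b C by (auto simp: candidate_chain_def out_dominates_def)
    qed
  qed
  then show ?thesis using C x by (auto simp: candidate_chain_def)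
qed

lemma candidate_chain_close:
  assumes "candidate_chain V adj S ys" and "a \<in> S"
  shows "sorted_wrt adj (a # ys)"
    and "out_dominates adj (set ys) (V - (set (a # ys) \<union> (S - {a})))"
proof -
  have "V - (set (a # ys) \<union> (S - {a})) = V - (set ys \<union> S)" using \<open>a \<in> S\<close> by auto
  then show "out_dominates adj (set ys) (V - (set (a # ys) \<union> (S - {a})))"
    using assms(1) by (simp add: candidate_chain_def)
  show "sorted_wrt adj (a # ys)" using assms by (simp add: candidate_chain_def)
qed

lemma candidate_chain_halving:
  assumes T: "tournament V adj"
  shows "candidate_chain V adj S ys \<Longrightarrow> S \<noteq> {} \<Longrightarrow>
    \<exists>pre E. pre \<noteq> [] \<and> set pre \<subseteq> S \<and> length pre \<le> Suc k \<and> sorted_wrt adj (pre @ ys) \<and>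
      E \<subseteq> S - set pre \<and> out_dominates adj (set (tl pre @ ys)) (V - (set (pre @ ys) \<union> E)) \<and>
      card E * 2 ^ k \<le> card S"
proof (induction k arbitrary: S ys)
  case 0
  then obtain a where "a \<in> S" by blast
  moreover have "card (S - {a}) \<le> card S"
    using "0.prems"(1) T by (simp add: candidate_chain_def card_mono tournament_finite_subset)
  ultimately show ?case using candidate_chain_close[OF "0.prems"(1)]
    by (intro exI[of _ "[a]"] exI[of _ "S - {a}"]) auto
next
  case (Suc k)
  have fin: "finite S"
    using Suc.prems(1) T by (simp add: candidate_chain_def tournament_finite_subset)
  show ?case
  proof (cases "2 \<le> card S")
    case False
    obtain a where a: "a \<in> S" using Suc.prems(2) by blast
    with False fin have "card (S - {a}) = 0" by simp
    then have "S - {a} = {}" using fin by simp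
    then have "out_dominates adj (set ys) (V - (set (a # ys) \<union> {}))"
      using candidate_chain_close(2)[OF Suc.prems(1) a] \<open>S - {a} = {}\<close> by (simp only:)
    then show ?thesis using candidate_chain_close(1)[OF Suc.prems(1) a] a
      by (intro exI[of _ "[a]"] exI[of _ "{}"]) auto
  next
    case True
    have SV: "S \<subseteq> V" using Suc.prems(1) by (simp add: candidate_chain_def)
    obtain x where x: "x \<in> S" "1 \<le> in_degree S adj x" "2 * in_degree S adj x \<le> card S"
      using ex_in_degree_pos_le_half[OF T SV True] by blast
    define S' where "S' = {u\<in>S. adj u x}"
    have "S' \<noteq> {}" using x(2) by (metis S'_def card.empty in_degree_def not_one_le_zero)
    then obtain pre E where IH: "pre \<noteq> []" "set pre \<subseteq> S'" "length pre \<le> Suc k"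
      "sorted_wrt adj (pre @ x # ys)" "E \<subseteq> S' - set pre"
      "out_dominates adj (set (tl pre @ x # ys)) (V - (set (pre @ x # ys) \<union> E))"
      "card E * 2 ^ k \<le> card S'"
      using Suc.IH[OF candidate_chain_extend[OF T Suc.prems(1) x(1)]] unfolding S'_def by blast
    have "x \<notin> S'" using tournamentD(4)[OF T] by (simp add: S'_def)
    moreover have "tl (pre @ [x]) = tl pre @ [x]" using IH(1) by (cases pre) auto
    moreover have "card E * 2 ^ Suc k \<le> card S"
      using IH(7) x(3) by (simp add: S'_def in_degree_def)
    ultimately show ?thesis using IH x(1)
      by (intro exI[of _ "pre @ [x]"] exI[of _ E]) (auto simp: S'_def)
  qed
qed

theorem lemma2p3:
  fixes V :: "'a set" and adj :: "'a \<Rightarrow> 'a \<Rightarrow> bool" and v :: 'a and c :: nat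
  assumes "tournament V adj" and "v \<in> V" and "c \<ge> 2"
    and "in_degree V adj v \<ge> 2 ^ (c - 1)"
  shows "\<exists>A E a. A \<subseteq> V \<and> E \<subseteq> V \<and> A \<inter> E = {} \<and> a \<in> A \<and>
           2 \<le> card A \<and> card A \<le> c \<and> transitive_with_source_sink adj A a v \<and>
           out_dominates adj (A - {a}) (V - (A \<union> E)) \<and>
           real (card E) \<le> (1/2) ^ (c - 2) * real (in_degree V adj v)"
proof -
  note T = assms(1)
  define S where "S = {u\<in>V. adj u v}"
  have "card S \<ge> 1"
    using assms(4) order_trans[OF one_le_power[of "2::nat" "c - 1"]]
    unfolding S_def in_degree_def by simp
  then have "S \<noteq> {}" by auto
  then obtain pre E where P: "pre \<noteq> []" "set pre \<subseteq> S" "length pre \<le> Suc (c - 2)"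
      "sorted_wrt adj (pre @ [v])" "E \<subseteq> S - set pre"
      "out_dominates adj (set (tl pre @ [v])) (V - (set (pre @ [v]) \<union> E))"
      "card E * 2 ^ (c - 2) \<le> card S"
    using candidate_chain_halving[OF T candidate_chain_sink[OF T assms(2)], of "c - 2"]
    unfolding S_def by blast
  define A where "A = set (pre @ [v])"
  have "distinct (pre @ [v])" using sorted_wrt_irrefl_distinct tournamentD(4)[OF T] P(4) by blast
  then have card_A: "card A = Suc (length pre)" and source_removed: "A - {hd pre} = set (tl pre @ [v])"
    using P(1) by (auto simp: A_def distinct_card neq_Nil_conv)
  have "2 \<le> card A" "card A \<le> c" using card_A P(1,3) assms(3) by (auto simp: neq_Nil_conv)
  moreover have "out_dominates adj (A - {hd pre}) (V - (A \<union> E))"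
    using P(6) unfolding source_removed by (simp add: A_def)
  moreover have "transitive_with_source_sink adj A (hd pre) v"
    using sorted_wrt_transitive_with_source_sink[OF T P(4)] P(1) by (simp add: A_def)
  moreover have "A \<subseteq> V" "E \<subseteq> V" "A \<inter> E = {}" "hd pre \<in> A"
    using P(1,2,5) assms(2) tournamentD(4)[OF T] by (auto simp: A_def S_def)
  moreover have "real (card E) * 2 ^ (c - 2) \<le> real (in_degree V adj v)"
    using of_nat_mono[OF P(7), where 'a=real] by (simp add: S_def in_degree_def)
  then have "real (card E) \<le> (1/2) ^ (c - 2) * real (in_degree V adj v)"
    by (simp add: power_one_over pos_le_divide_eq)
  ultimately show ?thesis by blast
qed

end
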